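(* In any medium with $n$ states, the number $m$ of effective transitions, i.e. the number of pairs $(S,t)$ with $S$ a state, $t$ a token and $St\neq S$, satisfies $m\le n\log_2 n$.
   Context: A medium consists of a finite set of states and a set of tokens, each token $t$ acting as a function on states, written $S\mapsto St$. Tokens concatenate into messages (words); $Sw$ denotes the state obtained by applying the tokens of $w$ successively to $S$. A token $t$ has a reverse $\tilde t$ if for any two distinct states $S\neq Q$, $St=Q$ iff $Q\tilde t=S$. A message is inconsistent if it contains some token together with its reverse, and consistent otherwise. A message $w$ is vacuous if for each token $t$ it contains equally many copies of $t$ and $\tilde t$. A token $t$ is effective for $S$ if $St\neq S$; a message is stepwise effective for $S$ if each successive token is effective for the state it is applied to. The axioms of a medium are: (1) each token has a unique reverse; (2) for any two distinct states $S,Q$ there is a consistent message $w$ with $Sw=Q$; (3) if $w$ is stepwise effective for $S$, then $Sw=S$ iff $w$ is vacuous; (4) if $Sw=Qz$, $w$ is stepwise effective for $S$, $z$ is stepwise effective for $Q$, and both $w,z$ are consistent, then the concatenation $wz$ is consistent. *)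

theory Defs
  imports Complex_Main
begin

definition is_reverse :: "'a set \<Rightarrow> ('a \<Rightarrow> 'b \<Rightarrow> 'a) \<Rightarrow> 'b \<Rightarrow> 'b \<Rightarrow> bool" where
  "is_reverse St act t r \<longleftrightarrow>
     (\<forall>P\<in>St. \<forall>Q\<in>St. P \<noteq> Q \<longrightarrow> (act P t = Q \<longleftrightarrow> act Q r = P))"

definition tok_rev :: "'a set \<Rightarrow> 'b set \<Rightarrow> ('a \<Rightarrow> 'b \<Rightarrow> 'a) \<Rightarrow> 'b \<Rightarrow> 'b" where
  "tok_rev St T act t = (THE r. r \<in> T \<and> is_reverse St act t r)"

definition apply_msg :: "('a \<Rightarrow> 'b \<Rightarrow> 'a) \<Rightarrow> 'a \<Rightarrow> 'b list \<Rightarrow> 'a" where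
  "apply_msg act P w = foldl act P w"

definition consistent_msg :: "'a set \<Rightarrow> 'b set \<Rightarrow> ('a \<Rightarrow> 'b \<Rightarrow> 'a) \<Rightarrow> 'b list \<Rightarrow> bool" where
  "consistent_msg St T act w \<longleftrightarrow> \<not> (\<exists>t\<in>set w. tok_rev St T act t \<in> set w)"

definition vacuous_msg :: "'a set \<Rightarrow> 'b set \<Rightarrow> ('a \<Rightarrow> 'b \<Rightarrow> 'a) \<Rightarrow> 'b list \<Rightarrow> bool" where
  "vacuous_msg St T act w \<longleftrightarrow>
     (\<forall>t\<in>T. count_list w t = count_list w (tok_rev St T act t))"

fun stepwise_effective :: "('a \<Rightarrow> 'b \<Rightarrow> 'a) \<Rightarrow> 'a \<Rightarrow> 'b list \<Rightarrow> bool" where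
  "stepwise_effective act P [] = True"
| "stepwise_effective act P (t # w) = (act P t \<noteq> P \<and> stepwise_effective act (act P t) w)"

definition medium :: "'a set \<Rightarrow> 'b set \<Rightarrow> ('a \<Rightarrow> 'b \<Rightarrow> 'a) \<Rightarrow> bool" where
  "medium St T act \<longleftrightarrow>
     finite St \<and>
     (\<forall>P\<in>St. \<forall>t\<in>T. act P t \<in> St) \<and>
     \<comment> \<open>(1) each token has a unique reverse\<close>
     (\<forall>t\<in>T. \<exists>!r. r \<in> T \<and> is_reverse St act t r) \<and>
     \<comment> \<open>(2) any two distinct states are joined by a consistent message\<close>
     (\<forall>P\<in>St. \<forall>Q\<in>St. P \<noteq> Q \<longrightarrow>
        (\<exists>w. set w \<subseteq> T \<and> consistent_msg St T act w \<and> apply_msg act P w = Q)) \<and>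
     \<comment> \<open>(3) stepwise effective messages return iff vacuous\<close>
     (\<forall>P\<in>St. \<forall>w. set w \<subseteq> T \<longrightarrow> stepwise_effective act P w \<longrightarrow>
        (apply_msg act P w = P \<longleftrightarrow> vacuous_msg St T act w)) \<and>
     \<comment> \<open>(4)\<close>
     (\<forall>P\<in>St. \<forall>Q\<in>St. \<forall>w z. set w \<subseteq> T \<longrightarrow> set z \<subseteq> T \<longrightarrow>
        apply_msg act P w = apply_msg act Q z \<longrightarrow>
        stepwise_effective act P w \<longrightarrow> stepwise_effective act Q z \<longrightarrow>
        consistent_msg St T act w \<longrightarrow> consistent_msg St T act z \<longrightarrow>
        consistent_msg St T act (w @ z))"

definition effective_transitions :: "'a set \<Rightarrow> 'b set \<Rightarrow> ('a \<Rightarrow> 'b \<Rightarrow> 'a) \<Rightarrow> ('a \<times> 'b) set" where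
  "effective_transitions St T act = {(P, t). P \<in> St \<and> t \<in> T \<and> act P t \<noteq> P}"

end

theory Submission
  imports Defs "HOL-Analysis.Convex"
begin

text \<open>Fix a base state P0 and give every state S its content: the set of tokens of a
  concise (stepwise effective and consistent) message from P0 to S. Contents determine
  states, an effective transition S t changes the content only in t or its reverse, and
  two distinct effective transitions from one state never change the same token. So the
  states sit in a hypercube, and the transitions are edges of it such that distinct
  edges at a vertex go in distinct directions. Split the states into parts of sizes a
  and b according to one token: a transition crossing the cut is determined by its
  source, so there are at most 2 min(a, b) of them, and induction with the inequality
  a log a + b log b + 2 min(a, b) \<le> (a + b) log (a + b) for a, b \<ge> 1 give the bound.\<close>

lemma two_powr_le_one_plus:
  fixes y :: real
  assumes "0 \<le> y" "y \<le> 1"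
  shows "2 powr y \<le> 1 + y"
proof -
  have "exp ((1 - y) *\<^sub>R 0 + y *\<^sub>R ln 2) \<le> (1 - y) * exp 0 + y * exp (ln 2)"
    using convex_onD[OF exp_convex, of y 0 "ln 2"] assms by simp
  then show ?thesis
    by (simp add: powr_def algebra_simps)
qed

lemma le_log2_one_plus:
  fixes y :: real
  assumes "0 \<le> y" "y \<le> 1"
  shows "y \<le> log 2 (1 + y)"
  using le_log_iff[of 2 "1 + y" y] two_powr_le_one_plus[OF assms] assms by simp

lemma mult_log2_add_ge_of_le:
  fixes a b :: real
  assumes "1 \<le> a" "a \<le> b"
  shows "a * log 2 a + b * log 2 b + 2 * a \<le> (a + b) * log 2 (a + b)"
proof -
  have "a * (1 + log 2 a) = a * log 2 (2 * a)"
    using assms by (simp add: log_mult)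
  also have "\<dots> \<le> a * log 2 (a + b)"
    using assms by simp
  finally have small: "a * (1 + log 2 a) \<le> a * log 2 (a + b)" .
  have "a / b \<le> log 2 (1 + a / b)"
    using assms by (intro le_log2_one_plus) auto
  also have "1 + a / b = (a + b) / b"
    using assms by (simp add: field_simps)
  also have "log 2 ((a + b) / b) = log 2 (a + b) - log 2 b"
    using assms by (simp add: log_divide)
  finally have "a \<le> b * (log 2 (a + b) - log 2 b)"
    using assms by (simp add: field_simps)
  with small show ?thesis
    by (simp add: algebra_simps)
qed

lemma mult_log2_add_ge:
  fixes a b :: real
  assumes "1 \<le> a" "1 \<le> b"
  shows "a * log 2 a + b * log 2 b + 2 * min a b \<le> (a + b) * log 2 (a + b)"
  using mult_log2_add_ge_of_le[of a b] mult_log2_add_ge_of_le[of b a] assms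
  by (cases "a \<le> b") (simp_all add: min_def algebra_simps)

lemma card_crossing_edges_le:
  assumes separating: "\<And>x y z. (x, y) \<in> E \<Longrightarrow> (x, z) \<in> E \<Longrightarrow>
      (e \<in> L x) \<noteq> (e \<in> L y) \<Longrightarrow> (e \<in> L x) \<noteq> (e \<in> L z) \<Longrightarrow> y = z"
    and "finite A" and cut: "\<And>x y. x \<in> A \<Longrightarrow> y \<in> B \<Longrightarrow> (e \<in> L x) \<noteq> (e \<in> L y)"
  shows "card (E \<inter> A \<times> B) \<le> card A"
proof (rule card_inj_on_le[of fst])
  show "inj_on fst (E \<inter> A \<times> B)"
  proof (rule inj_onI)
    fix p q
    assume p: "p \<in> E \<inter> A \<times> B" and q: "q \<in> E \<inter> A \<times> B" and "fst p = fst q"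
    then obtain x y z where pq: "p = (x, y)" "q = (x, z)"
      by (metis prod.collapse)
    have "y = z"
    proof (rule separating)
      show "(x, y) \<in> E" "(x, z) \<in> E"
        using p q pq by simp_all
      show "(e \<in> L x) \<noteq> (e \<in> L y)" "(e \<in> L x) \<noteq> (e \<in> L z)"
        using p q pq by (simp_all add: cut)
    qed
    with pq show "p = q"
      by simp
  qed
qed (use \<open>finite A\<close> in auto)

lemma card_induced_edges_split:
  assumes "sym E"
    and separating: "\<And>x y z e. (x, y) \<in> E \<Longrightarrow> (x, z) \<in> E \<Longrightarrow>
      (e \<in> L x) \<noteq> (e \<in> L y) \<Longrightarrow> (e \<in> L x) \<noteq> (e \<in> L z) \<Longrightarrow> y = z"
    and "finite A" "finite B"
    and cut: "\<And>x y. x \<in> A \<Longrightarrow> y \<in> B \<Longrightarrow> (e \<in> L x) \<noteq> (e \<in> L y)"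
  shows "card (Restr E (A \<union> B))
    \<le> card (Restr E A) + card (Restr E B) + 2 * min (card A) (card B)"
proof -
  have converse: "E \<inter> B \<times> A = (E \<inter> A \<times> B)\<inverse>"
    using \<open>sym E\<close> by (auto dest: symD)
  have AB: "card (E \<inter> A \<times> B) \<le> min (card A) (card B)"
    using card_crossing_edges_le[of E e L A B] card_crossing_edges_le[of E e L B A]
      separating cut converse \<open>finite A\<close> \<open>finite B\<close> by (simp add: eq_commute)
  have "Restr E (A \<union> B) = (Restr E A \<union> Restr E B) \<union> (E \<inter> A \<times> B \<union> E \<inter> B \<times> A)"
    by blast
  also have "card \<dots> \<le> card (Restr E A \<union> Restr E B) + card (E \<inter> A \<times> B \<union> E \<inter> B \<times> A)"
    by (rule card_Un_le)
  also have "\<dots> \<le> card (Restr E A) + card (Restr E B) + (card (E \<inter> A \<times> B) + card (E \<inter> B \<times> A))"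
    by (intro add_mono card_Un_le)
  finally have "card (Restr E (A \<union> B))
      \<le> card (Restr E A) + card (Restr E B) + (card (E \<inter> A \<times> B) + card (E \<inter> B \<times> A))" .
  with AB converse show ?thesis
    by (simp add: min_def)
qed

lemma Restr_irrefl_card_le_1:
  assumes "card W \<le> 1" "finite W" "irrefl E"
  shows "Restr E W = {}"
proof (rule equals0I)
  fix p
  assume "p \<in> Restr E W"
  then obtain x y where xy: "(x, y) \<in> E" "x \<in> W" "y \<in> W"
    by auto
  then have "x = y"
    using card_le_Suc0_iff_eq[OF \<open>finite W\<close>] \<open>card W \<le> 1\<close> by (metis One_nat_def)
  with xy show False
    using \<open>irrefl E\<close> by (simp add: irrefl_def)
qed

lemma card_induced_edges_le:
  fixes E :: "('v \<times> 'v) set" and L :: "'v \<Rightarrow> 'c set"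
  assumes "finite W" "inj_on L W" "sym E" "irrefl E"
    and separating: "\<And>x y z e. (x, y) \<in> E \<Longrightarrow> (x, z) \<in> E \<Longrightarrow>
      (e \<in> L x) \<noteq> (e \<in> L y) \<Longrightarrow> (e \<in> L x) \<noteq> (e \<in> L z) \<Longrightarrow> y = z"
  shows "real (card (Restr E W)) \<le> real (card W) * log 2 (real (card W))"
  using assms(1,2)
proof (induction W rule: finite_psubset_induct)
  case (psubset W)
  show ?case
  proof (cases "card W \<le> 1")
    case True
    then have "Restr E W = {}"
      using psubset.hyps(1) \<open>irrefl E\<close> by (rule Restr_irrefl_card_le_1)
    with True show ?thesis
      by (cases "card W") auto
  next
    case False
    then obtain x y where xy: "x \<in> W" "y \<in> W" "x \<noteq> y"
      using card_le_Suc0_iff_eq[OF psubset.hyps(1)] by auto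
    then have "L x \<noteq> L y"
      using psubset.prems by (auto dest: inj_onD)
    then obtain e where e: "(e \<in> L x) \<noteq> (e \<in> L y)"
      by blast
    define A where "A = {z \<in> W. e \<in> L z}"
    define B where "B = {z \<in> W. e \<notin> L z}"
    have W: "W = A \<union> B" "A \<inter> B = {}" and "A \<subset> W" "B \<subset> W"
      using xy e by (auto simp: A_def B_def)
    then have fin: "finite A" "finite B"
      using psubset.hyps(1) by (auto intro: finite_subset)
    have card_W: "card W = card A + card B"
      using W fin by (simp add: card_Un_disjoint)
    have "A \<noteq> {}" "B \<noteq> {}"
      using xy e by (auto simp: A_def B_def)
    then have ge1: "1 \<le> card A" "1 \<le> card B"
      using fin by (auto simp: Suc_le_eq card_gt_0_iff)
    have IH: "real (card (Restr E A)) \<le> real (card A) * log 2 (real (card A))"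
        "real (card (Restr E B)) \<le> real (card B) * log 2 (real (card B))"
      using psubset.IH \<open>A \<subset> W\<close> \<open>B \<subset> W\<close> psubset.prems by (auto intro: inj_on_subset)
    have "card (Restr E W) \<le> card (Restr E A) + card (Restr E B) + 2 * min (card A) (card B)"
      unfolding W(1)
      by (rule card_induced_edges_split[OF \<open>sym E\<close> separating fin]) (auto simp: A_def B_def)
    then have "real (card (Restr E W))
        \<le> real (card (Restr E A)) + real (card (Restr E B)) + 2 * min (real (card A)) (real (card B))"
      by (simp flip: of_nat_min)
    also have "\<dots> \<le> real (card W) * log 2 (real (card W))"
      using IH mult_log2_add_ge[of "card A" "card B"] ge1 card_W by simp
    finally show ?thesis .
  qed
qed

lemma count_list_distinct: "distinct w \<Longrightarrow> count_list w x = (if x \<in> set w then 1 else 0)"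
  by (induction w) auto

locale Medium =
  fixes St :: "'a set" and T :: "'b set" and act :: "'a \<Rightarrow> 'b \<Rightarrow> 'a"
  assumes medium: "medium St T act"
begin

abbreviation rv :: "'b \<Rightarrow> 'b" where
  "rv t \<equiv> tok_rev St T act t"

abbreviation consistent :: "'b list \<Rightarrow> bool" where
  "consistent w \<equiv> consistent_msg St T act w"

definition concise :: "'a \<Rightarrow> 'b list \<Rightarrow> bool" where
  "concise P w \<longleftrightarrow> set w \<subseteq> T \<and> stepwise_effective act P w \<and> consistent w"

lemma finite_states: "finite St"
  using medium by (simp add: medium_def)

lemma act_closed: "P \<in> St \<Longrightarrow> t \<in> T \<Longrightarrow> act P t \<in> St"
  using medium by (simp add: medium_def)

lemma unique_reverse: "t \<in> T \<Longrightarrow> \<exists>!r. r \<in> T \<and> is_reverse St act t r"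
  using medium by (simp add: medium_def)

lemma consistent_msg_exists:
  "P \<in> St \<Longrightarrow> Q \<in> St \<Longrightarrow> P \<noteq> Q \<Longrightarrow> \<exists>w. set w \<subseteq> T \<and> consistent w \<and> apply_msg act P w = Q"
  using medium unfolding medium_def by blast

lemma effective_loop_vacuous:
  "P \<in> St \<Longrightarrow> set w \<subseteq> T \<Longrightarrow> stepwise_effective act P w \<Longrightarrow> apply_msg act P w = P \<Longrightarrow>
    vacuous_msg St T act w"
  using medium unfolding medium_def by blast

lemma consistent_append:
  "P \<in> St \<Longrightarrow> Q \<in> St \<Longrightarrow> set w \<subseteq> T \<Longrightarrow> set z \<subseteq> T \<Longrightarrow>
    apply_msg act P w = apply_msg act Q z \<Longrightarrow>
    stepwise_effective act P w \<Longrightarrow> stepwise_effective act Q z \<Longrightarrow>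
    consistent w \<Longrightarrow> consistent z \<Longrightarrow> consistent (w @ z)"
  using medium unfolding medium_def by blast

lemma rv_in_tokens: "t \<in> T \<Longrightarrow> rv t \<in> T"
  and is_reverse_rv: "t \<in> T \<Longrightarrow> is_reverse St act t (rv t)"
  using theI'[OF unique_reverse] by (simp_all add: tok_rev_def)

lemma is_reverse_sym:
  assumes "is_reverse St act t r"
  shows "is_reverse St act r t"
  unfolding is_reverse_def
proof (intro ballI impI)
  fix P Q
  assume "P \<in> St" "Q \<in> St" "P \<noteq> Q"
  then show "act P r = Q \<longleftrightarrow> act Q t = P"
    using assms[unfolded is_reverse_def, rule_format, of Q P] by auto
qed

lemma rv_rv [simp]:
  assumes "t \<in> T"
  shows "rv (rv t) = t"
proof -
  have rt: "rv t \<in> T"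
    using assms by (rule rv_in_tokens)
  have "rv (rv t) \<in> T \<and> is_reverse St act (rv t) (rv (rv t))"
    using rv_in_tokens[OF rt] is_reverse_rv[OF rt] by blast
  moreover have "t \<in> T \<and> is_reverse St act (rv t) t"
    using assms is_reverse_sym[OF is_reverse_rv[OF assms]] by blast
  ultimately show ?thesis
    using unique_reverse[OF rt] by blast
qed

lemma act_rv_cancel: "P \<in> St \<Longrightarrow> t \<in> T \<Longrightarrow> act P t \<noteq> P \<Longrightarrow> act (act P t) (rv t) = P"
  using is_reverse_rv act_closed unfolding is_reverse_def by metis

lemma apply_msg_simps [simp]:
  "apply_msg act P [] = P"
  "apply_msg act P (t # w) = apply_msg act (act P t) w"
  "apply_msg act P (v @ w) = apply_msg act (apply_msg act P v) w"
  by (simp_all add: apply_msg_def)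

lemma apply_msg_in_states: "P \<in> St \<Longrightarrow> set w \<subseteq> T \<Longrightarrow> apply_msg act P w \<in> St"
  by (induction w arbitrary: P) (auto simp: act_closed)

lemma stepwise_effective_append [simp]:
  "stepwise_effective act P (v @ w) \<longleftrightarrow>
    stepwise_effective act P v \<and> stepwise_effective act (apply_msg act P v) w"
  by (induction v arbitrary: P) auto

lemma consistent_subset: "set v \<subseteq> set w \<Longrightarrow> consistent w \<Longrightarrow> consistent v"
  unfolding consistent_msg_def by blast

lemma consistent_no_reverse: "consistent w \<Longrightarrow> t \<in> set w \<Longrightarrow> rv t \<notin> set w"
  unfolding consistent_msg_def by blast

fun drop_ineffective :: "'a \<Rightarrow> 'b list \<Rightarrow> 'b list" where
  "drop_ineffective P [] = []"
| "drop_ineffective P (t # w) =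
    (if act P t = P then drop_ineffective P w else t # drop_ineffective (act P t) w)"

lemma drop_ineffective:
  "apply_msg act P (drop_ineffective P w) = apply_msg act P w"
  "stepwise_effective act P (drop_ineffective P w)"
  "set (drop_ineffective P w) \<subseteq> set w"
  by (induction P w rule: drop_ineffective.induct) auto

lemma concise_msg_exists:
  assumes "P \<in> St" "Q \<in> St"
  shows "\<exists>w. concise P w \<and> apply_msg act P w = Q"
proof (cases "P = Q")
  case True
  then show ?thesis
    by (intro exI[of _ "[]"]) (simp add: concise_def consistent_msg_def)
next
  case False
  then obtain w where "set w \<subseteq> T" "consistent w" "apply_msg act P w = Q"
    using consistent_msg_exists assms by blast
  then show ?thesis
    using drop_ineffective[of P w] consistent_subset
    by (intro exI[of _ "drop_ineffective P w"]) (auto simp: concise_def)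
qed

definition reverse_msg :: "'b list \<Rightarrow> 'b list" where
  "reverse_msg w = rev (map rv w)"

lemma reverse_msg_returns:
  "P \<in> St \<Longrightarrow> set w \<subseteq> T \<Longrightarrow> stepwise_effective act P w \<Longrightarrow>
    stepwise_effective act (apply_msg act P w) (reverse_msg w) \<and>
    apply_msg act (apply_msg act P w) (reverse_msg w) = P"
proof (induction w arbitrary: P)
  case Nil
  then show ?case
    by (simp add: reverse_msg_def)
next
  case (Cons t w)
  then have t: "t \<in> T" "act P t \<noteq> P" and "act P t \<in> St"
    by (auto simp: act_closed)
  then have "stepwise_effective act (apply_msg act (act P t) w) (reverse_msg w) \<and>
      apply_msg act (apply_msg act (act P t) w) (reverse_msg w) = act P t"
    using Cons by simp
  moreover have "reverse_msg (t # w) = reverse_msg w @ [rv t]"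
    by (simp add: reverse_msg_def)
  ultimately show ?case
    using act_rv_cancel[OF Cons.prems(1) t] t by simp
qed

lemma reverse_msg_tokens: "set w \<subseteq> T \<Longrightarrow> set (reverse_msg w) \<subseteq> T"
  unfolding reverse_msg_def using rv_in_tokens by auto

lemma count_reverse_msg:
  "u \<in> T \<Longrightarrow> set w \<subseteq> T \<Longrightarrow> count_list (reverse_msg w) u = count_list w (rv u)"
proof (induction w)
  case (Cons x w)
  then have "rv x = u \<longleftrightarrow> x = rv u"
    by auto
  with Cons show ?case
    by (simp add: reverse_msg_def)
qed (simp add: reverse_msg_def)

lemma effective_loop_balanced:
  "P \<in> St \<Longrightarrow> set w \<subseteq> T \<Longrightarrow> stepwise_effective act P w \<Longrightarrow> apply_msg act P w = P \<Longrightarrow>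
    u \<in> T \<Longrightarrow> count_list w u = count_list w (rv u)"
  using effective_loop_vacuous unfolding vacuous_msg_def by blast

lemma consistent_singleton: "t \<in> T \<Longrightarrow> rv t \<noteq> t \<Longrightarrow> consistent [t]"
  by (simp add: consistent_msg_def)

lemma rv_neq_self:
  assumes P: "P \<in> St" and t: "t \<in> T" and eff: "act P t \<noteq> P"
  shows "rv t \<noteq> t"
proof
  assume rt: "rv t = t"
  obtain w where w: "concise P w" "apply_msg act P w = act P t"
    using concise_msg_exists[OF P act_closed[OF P t]] by blast
  then obtain u where u: "u \<in> set w"
    using eff by (cases w) auto
  have wT: "set w \<subseteq> T" and "consistent w"
    using w by (simp_all add: concise_def)
  then have u_rv: "rv u \<notin> set w" and uT: "u \<in> T"
    using u consistent_no_reverse by auto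
  have "act (act P t) t = P"
    using act_rv_cancel[OF P t eff] rt by simp
  then have "count_list (w @ [t]) u = count_list (w @ [t]) (rv u)"
    using effective_loop_balanced[OF P _ _ _ uT, of "w @ [t]"] w wT t eff
    by (simp add: concise_def)
  then have "t = rv u"
    using u u_rv by (auto simp: count_list_0_iff split: if_splits)
  then have "rv u = u"
    using rt uT by (metis rv_rv)
  with u u_rv show False
    by simp
qed

lemma not_effective_both:
  assumes P: "P \<in> St" and t: "t \<in> T" and eff: "act P t \<noteq> P"
  shows "act P (rv t) = P"
proof (rule ccontr)
  assume eff': "act P (rv t) \<noteq> P"
  have rt: "rv t \<in> T" "rv t \<noteq> t"
    using rv_in_tokens[OF t] rv_neq_self[OF P t eff] .
  have "act (act P t) (rv t) = P" "act (act P (rv t)) t = P"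
    using act_rv_cancel[OF P t eff] act_rv_cancel[OF P rt(1) eff'] t by simp_all
  \<comment> \<open>The one-token messages rv t from P t and t from P (rv t) both end in P.\<close>
  then have "consistent ([rv t] @ [t])"
    using consistent_append[OF act_closed[OF P t] act_closed[OF P rt(1)], of "[rv t]" "[t]"]
      consistent_singleton eff eff' t rt by (simp add: eq_commute)
  then show False
    by (simp add: consistent_msg_def)
qed

lemma concise_distinct:
  assumes P: "P \<in> St" and w: "concise P w"
  shows "distinct w"
proof (rule ccontr)
  assume "\<not> distinct w"
  then obtain a b c t where split: "w = a @ [t] @ b @ [t] @ c"
    using not_distinct_decomp by blast
  have wT: "set w \<subseteq> T" and eff: "stepwise_effective act P w" and cons: "consistent w"
    using w by (simp_all add: concise_def)
  define S where "S = apply_msg act P a"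
  define R where "R = apply_msg act S (t # b)"
  have tT: "t \<in> T"
    using wT split by simp
  have S: "S \<in> St"
    using wT split P by (simp add: S_def apply_msg_in_states)
  then have R: "R \<in> St"
    using wT split by (simp add: R_def apply_msg_in_states del: apply_msg_simps(2))
  have eff_tb: "stepwise_effective act S (t # b)" and eff_t: "act R t \<noteq> R"
    using eff by (simp_all add: split S_def R_def)
  have return: "act (act R t) (rv t) = R"
    using act_rv_cancel[OF R tT eff_t] .
  \<comment> \<open>t b leads from S to R, and rv t leads back from R t to R.\<close>
  have "consistent ((t # b) @ [rv t])"
  proof (rule consistent_append[OF S act_closed[OF R tT]])
    show "consistent (t # b)"
      by (rule consistent_subset[OF _ cons]) (auto simp: split)
    show "consistent [rv t]"
      using consistent_singleton[OF rv_in_tokens[OF tT]] rv_neq_self[OF R tT eff_t] tT by simp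
  qed (use wT split eff_tb return eff_t tT rv_in_tokens R_def in auto)
  then show False
    by (simp add: consistent_msg_def)
qed

definition concise_path :: "'a \<Rightarrow> 'a \<Rightarrow> 'b list" where
  "concise_path P0 S = (SOME w. concise P0 w \<and> apply_msg act P0 w = S)"

definition content :: "'a \<Rightarrow> 'a \<Rightarrow> 'b set" where
  "content P0 S = set (concise_path P0 S)"

lemma concise_path:
  "P0 \<in> St \<Longrightarrow> S \<in> St \<Longrightarrow>
    concise P0 (concise_path P0 S) \<and> apply_msg act P0 (concise_path P0 S) = S"
  unfolding concise_path_def by (rule someI_ex[OF concise_msg_exists])

text \<open>Going from P0 to S, along v to Q and back to P0 by the reversed path to Q
  is a stepwise effective loop, hence balanced.\<close>

lemma concise_paths_count_balanced:
  assumes P0: "P0 \<in> St" and S: "S \<in> St" and Q: "Q \<in> St"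
    and v: "set v \<subseteq> T" "stepwise_effective act S v" "apply_msg act S v = Q" and u: "u \<in> T"
  defines "w \<equiv> concise_path P0 S" and "z \<equiv> concise_path P0 Q"
  shows "count_list w u + count_list v u + count_list z (rv u)
       = count_list w (rv u) + count_list v (rv u) + count_list z u"
proof -
  have w: "set w \<subseteq> T" "stepwise_effective act P0 w" "apply_msg act P0 w = S"
    using concise_path[OF P0 S] by (simp_all add: w_def concise_def)
  have z: "set z \<subseteq> T" "stepwise_effective act P0 z" "apply_msg act P0 z = Q"
    using concise_path[OF P0 Q] by (simp_all add: z_def concise_def)
  let ?loop = "w @ v @ reverse_msg z"
  have "count_list ?loop u = count_list ?loop (rv u)"
  proof (rule effective_loop_balanced[OF P0 _ _ _ u])
    show "set ?loop \<subseteq> T"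
      using w v z reverse_msg_tokens by auto
    show "stepwise_effective act P0 ?loop" "apply_msg act P0 ?loop = P0"
      using w v z reverse_msg_returns[OF P0 z(1,2)] by simp_all
  qed
  then show ?thesis
    using count_reverse_msg[OF u z(1)] count_reverse_msg[OF rv_in_tokens[OF u] z(1)] u by simp
qed

lemma content_crossing:
  assumes P0: "P0 \<in> St" and S: "S \<in> St" and t: "t \<in> T" and eff: "act S t \<noteq> S"
    and e: "(e \<in> content P0 S) \<noteq> (e \<in> content P0 (act S t))"
  shows "e = t \<or> e = rv t"
proof (rule ccontr)
  assume ne: "\<not> (e = t \<or> e = rv t)"
  define w where "w = concise_path P0 S"
  define z where "z = concise_path P0 (act S t)"
  have w: "set w \<subseteq> T" "consistent w" and z: "set z \<subseteq> T" "consistent z"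
    using concise_path[OF P0 S] concise_path[OF P0 act_closed[OF S t]]
    by (simp_all add: w_def z_def concise_def)
  have e_wz: "(e \<in> set w) \<noteq> (e \<in> set z)"
    using e by (simp add: content_def w_def z_def)
  then have eT: "e \<in> T"
    using w z by blast
  have "t \<noteq> rv e"
    using ne eT by auto
  then have "count_list w e + count_list z (rv e) = count_list w (rv e) + count_list z e"
    using concise_paths_count_balanced[OF P0 S act_closed[OF S t], of "[t]" e] t eff eT ne
    by (auto simp: w_def z_def)
  moreover have "rv e \<notin> set w" if "e \<in> set w"
    using consistent_no_reverse[OF w(2) that] .
  moreover have "rv e \<notin> set z" if "e \<in> set z"
    using consistent_no_reverse[OF z(2) that] .
  ultimately show False
    using e_wz by (auto simp: count_list_0_iff)
qed

lemma content_inj: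
  assumes P0: "P0 \<in> St"
  shows "inj_on (content P0) St"
proof (rule inj_onI, rule ccontr)
  fix S Q
  assume S: "S \<in> St" and Q: "Q \<in> St" and eq: "content P0 S = content P0 Q" and "S \<noteq> Q"
  obtain v where v: "concise S v" "apply_msg act S v = Q"
    using concise_msg_exists[OF S Q] by blast
  then obtain u where u: "u \<in> set v"
    using \<open>S \<noteq> Q\<close> by (cases v) auto
  have vT: "set v \<subseteq> T" and "consistent v"
    using v by (simp_all add: concise_def)
  then have uT: "u \<in> T" and "rv u \<notin> set v"
    using u consistent_no_reverse by auto
  \<comment> \<open>Concise paths have no repeated tokens, so equal contents give equal token counts.\<close>
  have "count_list (concise_path P0 S) x = count_list (concise_path P0 Q) x" for x
    using concise_distinct[OF P0] concise_path[OF P0 S] concise_path[OF P0 Q] eq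
    by (simp add: content_def count_list_distinct)
  then have "count_list v u = count_list v (rv u)"
    using concise_paths_count_balanced[OF P0 S Q vT _ v(2) uT] v(1) by (simp add: concise_def)
  with u \<open>rv u \<notin> set v\<close> show False
    by (simp add: count_list_0_iff)
qed

lemma effective_token_unique:
  assumes P0: "P0 \<in> St" and S: "S \<in> St"
    and t: "t \<in> T" "act S t \<noteq> S" and t': "t' \<in> T" "act S t' \<noteq> S"
    and e: "(e \<in> content P0 S) \<noteq> (e \<in> content P0 (act S t))"
      "(e \<in> content P0 S) \<noteq> (e \<in> content P0 (act S t'))"
  shows "t = t'"
proof (rule ccontr)
  assume "t \<noteq> t'"
  moreover have "e = t \<or> e = rv t" "e = t' \<or> e = rv t'"
    using content_crossing[OF P0 S t e(1)] content_crossing[OF P0 S t' e(2)] .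
  ultimately have "t' = rv t"
    using rv_rv[OF t(1)] rv_rv[OF t'(1)] by auto
  then show False
    using not_effective_both[OF S t] t' by simp
qed

definition transition_graph :: "('a \<times> 'a) set" where
  "transition_graph = (\<lambda>(S, t). (S, act S t)) ` effective_transitions St T act"

lemma transition_graph_subset: "transition_graph \<subseteq> St \<times> St"
  by (auto simp: transition_graph_def effective_transitions_def act_closed)

lemma irrefl_transition_graph: "irrefl transition_graph"
  by (auto simp: irrefl_def transition_graph_def effective_transitions_def)

lemma sym_transition_graph: "sym transition_graph"
proof (rule symI)
  fix S Q
  assume "(S, Q) \<in> transition_graph"
  then obtain t where S: "S \<in> St" and t: "t \<in> T" "act S t \<noteq> S" and Q: "Q = act S t"
    by (auto simp: transition_graph_def effective_transitions_def)
  then have "act Q (rv t) = S" "Q \<in> St" "rv t \<in> T"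
    using act_rv_cancel act_closed rv_in_tokens by auto
  with t Q have "(Q, rv t) \<in> effective_transitions St T act"
    by (auto simp: effective_transitions_def)
  then show "(Q, S) \<in> transition_graph"
    unfolding transition_graph_def using \<open>act Q (rv t) = S\<close> by force
qed

lemma inj_on_transition_edge: "inj_on (\<lambda>(S, t). (S, act S t)) (effective_transitions St T act)"
proof (rule inj_onI)
  fix p p'
  assume "p \<in> effective_transitions St T act" "p' \<in> effective_transitions St T act"
    and "(\<lambda>(S, t). (S, act S t)) p = (\<lambda>(S, t). (S, act S t)) p'"
  then obtain S t t' where p: "p = (S, t)" "p' = (S, t')" and eq: "act S t = act S t'"
    and S: "S \<in> St" and t: "t \<in> T" "act S t \<noteq> S" and t': "t' \<in> T" "act S t' \<noteq> S"
    by (cases p, cases p') (auto simp: effective_transitions_def)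
  then have "content S S \<noteq> content S (act S t)"
    using inj_onD[OF content_inj[OF S]] act_closed by metis
  then obtain e where "(e \<in> content S S) \<noteq> (e \<in> content S (act S t))"
    by blast
  then have "t = t'"
    using effective_token_unique[OF S S t t'] eq by simp
  with p show "p = p'"
    by simp
qed

lemma transition_graph_separating:
  assumes P0: "P0 \<in> St" and edges: "(S, Q) \<in> transition_graph" "(S, R) \<in> transition_graph"
    and e: "(e \<in> content P0 S) \<noteq> (e \<in> content P0 Q)" "(e \<in> content P0 S) \<noteq> (e \<in> content P0 R)"
  shows "Q = R"
proof -
  obtain t t' where "S \<in> St" "t \<in> T" "act S t \<noteq> S" "Q = act S t"
    and "t' \<in> T" "act S t' \<noteq> S" "R = act S t'"
    using edges by (auto simp: transition_graph_def effective_transitions_def)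
  then show ?thesis
    using effective_token_unique[OF P0, of S t t' e] e by simp
qed

lemma card_effective_transitions_le:
  "real (card (effective_transitions St T act)) \<le> real (card St) * log 2 (real (card St))"
proof (cases "St = {}")
  case True
  then show ?thesis
    by (simp add: effective_transitions_def)
next
  case False
  then obtain P0 where P0: "P0 \<in> St"
    by blast
  have "card (effective_transitions St T act) = card (Restr transition_graph St)"
    using card_image[OF inj_on_transition_edge] transition_graph_subset
    by (simp add: transition_graph_def Int_absorb2)
  also have "real \<dots> \<le> real (card St) * log 2 (real (card St))"
    using card_induced_edges_le[OF finite_states content_inj[OF P0] sym_transition_graph
        irrefl_transition_graph transition_graph_separating[OF P0]] .
  finally show ?thesis .
qed

end

theorem mainTheorem1:
  fixes St :: "'a set" and T :: "'b set" and act :: "'a \<Rightarrow> 'b \<Rightarrow> 'a"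
  assumes "medium St T act"
  shows "real (card (effective_transitions St T act)) \<le> real (card St) * log 2 (real (card St))"
proof -
  interpret Medium St T act
    using assms by (rule Medium.intro)
  show ?thesis
    by (rule card_effective_transitions_le)
qed

end
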